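(* Assume $\beta>1$ and $0<\omega_i^{\min}\le\omega_i^k\le\omega_i^{\max}<\infty$ ($i\le N-1$), $0<\nu_i^{\min}\le\nu_i^k\le\nu_i^{\max}<\infty$ ($i\le N-2$) for all $k\ge0$. Then the iterates of the 2-splitting proximal point ADMM are bounded: there exist constants $\mathcal{W}_i^{\max},\mathcal{V}_i^{\max},\lambda^{\max}>0$ such that $\|W_i^k\|_F\le\mathcal{W}_i^{\max}$, $\|V_i^k\|_F\le\mathcal{V}_i^{\max}$ ($i=1,\dots,N$) and $\|\Lambda^k\|_F\le\lambda^{\max}$ for all $k\ge0$.
   Context: Data $X\in\mathbb{R}^{d\times n}$, $Y\in\mathbb{R}^{q\times n}$, integer $N\ge3$, parameters $\lambda,\mu>0$, $\beta>0$. Activations $\sigma_i:\mathbb{R}\to\mathbb{R}$ ($i\le N-1$) real analytic with $|\sigma_i|\le\psi_0,|\sigma_i'|\le\psi_1,|\sigma_i''|\le\psi_2$ on $\mathbb{R}$, applied entrywise to matrices. $\|\cdot\|_F$ Frobenius norm, $\langle A,B\rangle=\mathrm{tr}(AB^T)$. $V_0:=X$ always. Variables $W_i\in\mathbb{R}^{d\times d}$ ($i\le N-1$), $W_N\in\mathbb{R}^{q\times d}$, $V_i\in\mathbb{R}^{d\times n}$ ($1\le i\le N-1$), $V_N,\Lambda\in\mathbb{R}^{q\times n}$. Augmented Lagrangian: $\mathcal{L}_\beta^{2s}(\{W_i\},\{V_i\},\Lambda)=\tfrac12\|V_N-Y\|_F^2+\tfrac\lambda2\sum_{i=1}^N\|W_i\|_F^2+\tfrac\mu2\sum_{i=1}^{N-1}\|V_{i-1}+\sigma_i(W_iV_{i-1})-V_i\|_F^2+\langle\Lambda,W_NV_{N-1}-V_N\rangle+\tfrac\beta2\|W_NV_{N-1}-V_N\|_F^2$.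 2-splitting proximal point ADMM: given arbitrary $W_i^0$, set $V_i^0=V_{i-1}^0+\sigma_i(W_i^0V_{i-1}^0)$ ($i\le N-1$), $V_N^0=W_N^0V_{N-1}^0$, $\Lambda^0=O$, and positive parameters $\omega_i^{k}$ ($i\le N-1$), $\nu_i^{k}$ ($i\le N-2$). For $k\ge1$: (a) $W_N^k=\arg\min_{W_N}\{\tfrac\lambda2\|W_N\|_F^2+\tfrac\beta2\|W_NV_{N-1}^{k-1}-V_N^{k-1}+\Lambda^{k-1}/\beta\|_F^2\}$; (b) for $i=N-1,\dots,1$: $W_i^k$ is a (fixed) minimizer of $\tfrac\lambda2\|W_i\|_F^2+\tfrac\mu2\|V_{i-1}^{k-1}+\sigma_i(W_iV_{i-1}^{k-1})-V_i^{k-1}\|_F^2+\tfrac{\omega_i^{k-1}}2\|W_i-W_i^{k-1}\|_F^2$; (c) for $i=1,\dots,N-2$: $V_i^k$ is a (fixed) minimizer of $\tfrac\mu2\|V_{i-1}^k+\sigma_i(W_i^kV_{i-1}^k)-V_i\|_F^2+\tfrac\mu2\|V_i+\sigma_{i+1}(W_{i+1}^kV_i)-V_{i+1}^{k-1}\|_F^2+\tfrac{\nu_i^{k-1}}2\|V_i-V_i^{k-1}\|_F^2$; (d) $V_{N-1}^k=\arg\min\{\tfrac\mu2\|V_{N-2}^k+\sigma_{N-1}(W_{N-1}^kV_{N-2}^k)-V_{N-1}\|_F^2+\tfrac\beta2\|W_N^kV_{N-1}-V_N^{k-1}+\Lambda^{k-1}/\beta\|_F^2\}$; (e) $V_N^k=\frac{1}{1+\beta}(Y+\beta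 W_N^kV_{N-1}^k+\Lambda^{k-1})$; (f) $\Lambda^k=\Lambda^{k-1}+\beta(W_N^kV_{N-1}^k-V_N^k)$. *)

theory Defs
  imports "HOL-Analysis.Analysis"
begin

text \<open>Matrices are rendered as real^'c^'r (r rows, c columns). For such matrices
  the library norm is the Frobenius norm, and ** is the matrix product.\<close>

definition entrywise :: "(real \<Rightarrow> real) \<Rightarrow> real^'c^'r \<Rightarrow> real^'c^'r" where
  "entrywise f M = (\<chi> i j. f (M $ i $ j))"

definition real_analytic :: "(real \<Rightarrow> real) \<Rightarrow> bool" where
  "real_analytic f \<longleftrightarrow>
     (\<forall>x. \<exists>r>0. \<exists>c::nat \<Rightarrow> real. \<forall>y. \<bar>y - x\<bar> < r \<longrightarrow> (\<lambda>k. c k * (y - x) ^ k) sums f y)"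

end

theory Submission
  imports Defs
begin

text \<open>The augmented Lagrangian \<open>L\<^sub>k\<close> along the iterates is a Lyapunov function. The
  \<open>W\<close>-updates and hidden \<open>V\<close>-updates are proximal block minimisations and cannot increase it;
  the \<open>V\<^sub>N\<close>-update minimises a strongly convex quadratic exactly and so decreases it by
  \<open>(1 + \<beta>)/2 \<parallel>\<Delta>V\<^sub>N\<parallel>\<^sup>2\<close>. Its optimality condition combined with the dual update gives
  \<open>\<Lambda>\<^sup>k = V\<^sub>N\<^sup>k - Y\<close> for \<open>k \<ge> 1\<close>, so the dual step raises \<open>L\<close> by only
  \<open>\<parallel>\<Delta>V\<^sub>N\<parallel>\<^sup>2/\<beta>\<close>; hence \<open>L\<^sub>k \<le> L\<^sub>1\<close> when \<open>\<beta> > 1\<close>. The same identity rewrites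
  \<open>L\<^sub>k\<close> as a sum of nonnegative terms
  \<open>\<lambda>/2 \<parallel>W\<parallel>\<^sup>2 + \<mu>/2 \<parallel>layer residuals\<parallel>\<^sup>2 + 1/2 \<parallel>\<Lambda> + r\<parallel>\<^sup>2 + (\<beta> - 1)/2 \<parallel>r\<parallel>\<^sup>2\<close>,
  with \<open>r\<close> the constraint residual, each bounded by \<open>L\<^sub>1\<close>; the hidden layers are then
  bounded layer by layer since the activations are bounded.\<close>

lemma norm_entrywise_le:
  fixes M :: "real^'c^'r"
  assumes "\<And>x. \<bar>f x\<bar> \<le> p"
  shows "norm (entrywise f M) \<le> real CARD('r) * real CARD('c) * p"
proof -
  have row: "norm (entrywise f M $ i) \<le> real CARD('c) * p" for i
  proof -
    have "norm (entrywise f M $ i) \<le> (\<Sum>j\<in>UNIV. \<bar>entrywise f M $ i $ j\<bar>)"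
      by (rule norm_le_l1_cart)
    also have "\<dots> \<le> (\<Sum>j\<in>(UNIV::'c set). p)"
      by (rule sum_mono) (simp add: entrywise_def assms)
    finally show ?thesis by simp
  qed
  have "norm (entrywise f M) \<le> (\<Sum>i\<in>UNIV. norm (entrywise f M $ i))"
    by (simp add: norm_vec_def L2_set_le_sum)
  also have "\<dots> \<le> (\<Sum>i\<in>(UNIV::'r set). real CARD('c) * p)"
    by (rule sum_mono) (rule row)
  finally show ?thesis by (simp add: mult.assoc)
qed

lemma le_sqrt_of_half_scaled_square_le:
  fixes x c C :: real
  assumes "0 < c" and "c/2 * x\<^sup>2 \<le> C"
  shows "x \<le> sqrt (2 * C / c)"
  by (rule real_le_rsqrt) (use assms in \<open>simp add: field_simps\<close>)

lemma max_norm_plus_one_pos: "0 < max b (norm z) + (1::real)"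
  using max.cobounded2[of "norm z" b] norm_ge_zero[of z] by linarith

lemma norm_le_max_initial:
  fixes x :: "nat \<Rightarrow> 'a::real_normed_vector"
  assumes "\<And>k. 1 \<le> k \<Longrightarrow> norm (x k) \<le> b"
  shows "norm (x k) \<le> max b (norm (x 0)) + 1"
  using assms[of k] by (cases k) auto

lemma power2_norm_add:
  fixes a b :: "'a::real_inner"
  shows "(norm (a + b))\<^sup>2 = (norm a)\<^sup>2 + 2 * inner a b + (norm b)\<^sup>2"
  by (simp add: power2_norm_eq_inner inner_add_left inner_add_right inner_commute)

lemma inner_plus_scaled_square_complete:
  fixes l x :: "'a::real_inner"
  assumes "beta > 0"
  shows "inner l x + beta/2 * (norm x)\<^sup>2
    = beta/2 * (norm (x + (1/beta) *\<^sub>R l))\<^sup>2 - (norm l)\<^sup>2 / (2*beta)"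
proof -
  have "(norm (x + (1/beta) *\<^sub>R l))\<^sup>2
      = (norm x)\<^sup>2 + 2 * (1/beta) * inner x l + (1/beta)\<^sup>2 * (norm l)\<^sup>2"
    by (simp add: power2_norm_add power_mult_distrib power_divide)
  then show ?thesis
    using assms by (simp add: field_simps power2_eq_square inner_commute)
qed

lemma half_square_inner_split:
  fixes l x :: "'a::real_inner"
  shows "1/2 * (norm l)\<^sup>2 + inner l x + beta/2 * (norm x)\<^sup>2
    = 1/2 * (norm (l + x))\<^sup>2 + (beta - 1)/2 * (norm x)\<^sup>2"
  by (simp add: power2_norm_eq_inner inner_add_left inner_add_right inner_commute field_simps)

text \<open>The function is a quadratic with Hessian \<open>(1 + beta) I\<close>, and the hypothesis says that
  its gradient vanishes at \<open>u\<close>.\<close>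
lemma quadratic_at_stationary_point:
  fixes u v Y Z l :: "'a::real_inner"
  assumes "(1 + beta) *\<^sub>R u = Y + beta *\<^sub>R Z + l"
  shows "1/2 * (norm (v - Y))\<^sup>2 + inner l (Z - v) + beta/2 * (norm (Z - v))\<^sup>2
    = 1/2 * (norm (u - Y))\<^sup>2 + inner l (Z - u) + beta/2 * (norm (Z - u))\<^sup>2
      + (1 + beta)/2 * (norm (v - u))\<^sup>2"
proof -
  define h where "h = v - u"
  have "(u - Y) - l - beta *\<^sub>R (Z - u) = 0"
    using assms by (simp add: algebra_simps)
  then have stationary: "inner (u - Y) h - inner l h - beta * inner (Z - u) h = 0"
    by (metis inner_diff_left inner_scaleR_left inner_zero_left)
  have "v - Y = (u - Y) + h" "Z - v = (Z - u) - h"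
    by (simp_all add: h_def)
  then show ?thesis
    unfolding h_def[symmetric] using stationary
    by (simp add: power2_norm_eq_inner inner_add_left inner_add_right inner_diff_left
        inner_diff_right inner_commute algebra_simps) (simp add: field_simps)
qed

lemma sweep_sum_le:
  fixes a b c :: "nat \<Rightarrow> real"
  assumes "1 \<le> n" and "b 1 \<le> c 1"
    and sweep: "\<And>i. 1 \<le> i \<Longrightarrow> i < n \<Longrightarrow> a i + b (Suc i) \<le> b i + c (Suc i)"
  shows "(\<Sum>i\<in>{1..<n}. a i) + b n \<le> (\<Sum>i\<in>{1..n}. c i)"
  using assms(1)
proof (induction n rule: dec_induct)
  case base
  then show ?case using assms(2) by simp
next
  case (step m)
  have "(\<Sum>i\<in>{1..<Suc m}. a i) + b (Suc m) = (\<Sum>i\<in>{1..<m}. a i) + (a m + b (Suc m))"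
    using step.hyps(1) by (simp add: sum.atLeastLessThan_Suc)
  also have "\<dots> \<le> (\<Sum>i\<in>{1..<m}. a i) + b m + c (Suc m)"
    using sweep[OF step.hyps] by simp
  also have "\<dots> \<le> (\<Sum>i\<in>{1..Suc m}. c i)"
    using step.IH by simp
  finally show ?case .
qed

text \<open>Steps (a)--(f) of the algorithm, reindexed from \<open>k\<close> to \<open>Suc k\<close>.\<close>
locale two_splitting_admm =
  fixes X :: "real^'n^'d" and Y :: "real^'n^'q"
    and N :: nat and lam mu beta psi0 :: real
    and sigma :: "nat \<Rightarrow> real \<Rightarrow> real"
    and W :: "nat \<Rightarrow> nat \<Rightarrow> real^'d^'d"
    and WN :: "nat \<Rightarrow> real^'d^'q"
    and V :: "nat \<Rightarrow> nat \<Rightarrow> real^'n^'d"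
    and VN Lam :: "nat \<Rightarrow> real^'n^'q"
    and omega nu :: "nat \<Rightarrow> nat \<Rightarrow> real"
  assumes N: "N \<ge> 2" and lam: "lam > 0" and mu: "mu > 0" and beta: "beta > 1"
    and sigma_bounded: "\<And>i x. i \<in> {1..N-1} \<Longrightarrow> \<bar>sigma i x\<bar> \<le> psi0"
    and omega_nonneg: "\<And>k i. i \<in> {1..N-1} \<Longrightarrow> 0 \<le> omega k i"
    and nu_nonneg: "\<And>k i. i \<in> {1..N-2} \<Longrightarrow> 0 \<le> nu k i"
    and input_layer: "\<And>k. V k 0 = X"
    and WN_update: "\<And>k Wn.
        lam/2 * (norm (WN (Suc k)))\<^sup>2
          + beta/2 * (norm (WN (Suc k) ** V k (N-1) - VN k + (1/beta) *\<^sub>R Lam k))\<^sup>2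
        \<le> lam/2 * (norm Wn)\<^sup>2
          + beta/2 * (norm (Wn ** V k (N-1) - VN k + (1/beta) *\<^sub>R Lam k))\<^sup>2"
    and W_update: "\<And>k i Wi. i \<in> {1..N-1} \<Longrightarrow>
        lam/2 * (norm (W (Suc k) i))\<^sup>2
          + mu/2 * (norm (V k (i-1) + entrywise (sigma i) (W (Suc k) i ** V k (i-1)) - V k i))\<^sup>2
          + omega k i / 2 * (norm (W (Suc k) i - W k i))\<^sup>2
        \<le> lam/2 * (norm Wi)\<^sup>2
          + mu/2 * (norm (V k (i-1) + entrywise (sigma i) (Wi ** V k (i-1)) - V k i))\<^sup>2
          + omega k i / 2 * (norm (Wi - W k i))\<^sup>2"
    and V_update: "\<And>k i Vi. i \<in> {1..N-2} \<Longrightarrow>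
        mu/2 * (norm (V (Suc k) (i-1) + entrywise (sigma i) (W (Suc k) i ** V (Suc k) (i-1))
                      - V (Suc k) i))\<^sup>2
          + mu/2 * (norm (V (Suc k) i + entrywise (sigma (i+1)) (W (Suc k) (i+1) ** V (Suc k) i)
                      - V k (i+1)))\<^sup>2
          + nu k i / 2 * (norm (V (Suc k) i - V k i))\<^sup>2
        \<le> mu/2 * (norm (V (Suc k) (i-1) + entrywise (sigma i) (W (Suc k) i ** V (Suc k) (i-1))
                      - Vi))\<^sup>2
          + mu/2 * (norm (Vi + entrywise (sigma (i+1)) (W (Suc k) (i+1) ** Vi) - V k (i+1)))\<^sup>2
          + nu k i / 2 * (norm (Vi - V k i))\<^sup>2"
    and V_last_update: "\<And>k Vv.
        mu/2 * (norm (V (Suc k) (N-2) + entrywise (sigma (N-1)) (W (Suc k) (N-1) ** V (Suc k) (N-2))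
                      - V (Suc k) (N-1)))\<^sup>2
          + beta/2 * (norm (WN (Suc k) ** V (Suc k) (N-1) - VN k + (1/beta) *\<^sub>R Lam k))\<^sup>2
        \<le> mu/2 * (norm (V (Suc k) (N-2) + entrywise (sigma (N-1)) (W (Suc k) (N-1) ** V (Suc k) (N-2))
                      - Vv))\<^sup>2
          + beta/2 * (norm (WN (Suc k) ** Vv - VN k + (1/beta) *\<^sub>R Lam k))\<^sup>2"
    and VN_update: "\<And>k. VN (Suc k)
        = (1/(1+beta)) *\<^sub>R (Y + beta *\<^sub>R (WN (Suc k) ** V (Suc k) (N-1)) + Lam k)"
    and Lam_update: "\<And>k. Lam (Suc k) = Lam k + beta *\<^sub>R (WN (Suc k) ** V (Suc k) (N-1) - VN (Suc k))"
begin

definition layer_residual :: "nat \<Rightarrow> real^'d^'d \<Rightarrow> real^'n^'d \<Rightarrow> real^'n^'d \<Rightarrow> real^'n^'d" where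
  "layer_residual i Wi Vp Vi = Vp + entrywise (sigma i) (Wi ** Vp) - Vi"

definition sum_sq_weights :: "(nat \<Rightarrow> real^'d^'d) \<Rightarrow> real" where
  "sum_sq_weights Ws = (\<Sum>i\<in>{1..N-1}. (norm (Ws i))\<^sup>2)"

definition sum_sq_layer_residuals :: "(nat \<Rightarrow> real^'d^'d) \<Rightarrow> (nat \<Rightarrow> real^'n^'d) \<Rightarrow> real" where
  "sum_sq_layer_residuals Ws Vs = (\<Sum>i\<in>{1..N-1}. (norm (layer_residual i (Ws i) (Vs (i-1)) (Vs i)))\<^sup>2)"

definition aug_lagrangian ::
    "(nat \<Rightarrow> real^'d^'d) \<Rightarrow> real^'d^'q \<Rightarrow> (nat \<Rightarrow> real^'n^'d) \<Rightarrow> real^'n^'q \<Rightarrow> real^'n^'q \<Rightarrow> real" where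
  "aug_lagrangian Ws Wn Vs Vn l =
     1/2 * (norm (Vn - Y))\<^sup>2 + lam/2 * sum_sq_weights Ws + lam/2 * (norm Wn)\<^sup>2
     + mu/2 * sum_sq_layer_residuals Ws Vs
     + inner l (Wn ** Vs (N-1) - Vn) + beta/2 * (norm (Wn ** Vs (N-1) - Vn))\<^sup>2"

abbreviation lagrangian :: "nat \<Rightarrow> real" where
  "lagrangian k \<equiv> aug_lagrangian (W k) (WN k) (V k) (VN k) (Lam k)"

lemma aug_lagrangian_shifted:
  "aug_lagrangian Ws Wn Vs Vn l =
     1/2 * (norm (Vn - Y))\<^sup>2 + lam/2 * sum_sq_weights Ws + lam/2 * (norm Wn)\<^sup>2
     + mu/2 * sum_sq_layer_residuals Ws Vs
     + beta/2 * (norm (Wn ** Vs (N-1) - Vn + (1/beta) *\<^sub>R l))\<^sup>2 - (norm l)\<^sup>2 / (2*beta)"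
  using inner_plus_scaled_square_complete[of beta l "Wn ** Vs (N-1) - Vn"] beta
  unfolding aug_lagrangian_def by simp

lemma lagrangian_W_step:
  "aug_lagrangian (W (Suc k)) (WN (Suc k)) (V k) (VN k) (Lam k)
    \<le> aug_lagrangian (W k) (WN k) (V k) (VN k) (Lam k)"
proof -
  have layer: "lam/2 * (norm (W (Suc k) i))\<^sup>2
        + mu/2 * (norm (layer_residual i (W (Suc k) i) (V k (i-1)) (V k i)))\<^sup>2
      \<le> lam/2 * (norm (W k i))\<^sup>2 + mu/2 * (norm (layer_residual i (W k i) (V k (i-1)) (V k i)))\<^sup>2"
    if i: "i \<in> {1..N-1}" for i
  proof -
    have "0 \<le> omega k i / 2 * (norm (W (Suc k) i - W k i))\<^sup>2"
      using omega_nonneg[OF i] by simp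
    then show ?thesis
      using W_update[OF i, of k "W k i"] unfolding layer_residual_def by simp
  qed
  have "lam/2 * sum_sq_weights (W (Suc k)) + mu/2 * sum_sq_layer_residuals (W (Suc k)) (V k)
      \<le> lam/2 * sum_sq_weights (W k) + mu/2 * sum_sq_layer_residuals (W k) (V k)"
    using sum_mono[of "{1..N-1}", OF layer]
    by (simp add: sum_sq_weights_def sum_sq_layer_residuals_def sum.distrib sum_distrib_left)
  then show ?thesis
    unfolding aug_lagrangian_shifted using WN_update[of k "WN k"] by linarith
qed

lemma lagrangian_V_step:
  "aug_lagrangian (W (Suc k)) (WN (Suc k)) (V (Suc k)) (VN k) (Lam k)
    \<le> aug_lagrangian (W (Suc k)) (WN (Suc k)) (V k) (VN k) (Lam k)"
proof -
  define r where "r Vs Vs' i = (norm (layer_residual i (W (Suc k) i) (Vs (i-1)) (Vs' i)))\<^sup>2"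
    for Vs Vs' i
  define pen where "pen v = beta/2 * (norm (WN (Suc k) ** v - VN k + (1/beta) *\<^sub>R Lam k))\<^sup>2"
    for v
  have sweep: "r (V (Suc k)) (V (Suc k)) i + r (V (Suc k)) (V k) (Suc i)
      \<le> r (V (Suc k)) (V k) i + r (V k) (V k) (Suc i)" if "1 \<le> i" "i < N - 1" for i
  proof -
    have i: "i \<in> {1..N-2}" using that by simp
    have "0 \<le> nu k i / 2 * (norm (V (Suc k) i - V k i))\<^sup>2"
      using nu_nonneg[OF i] by simp
    then have "mu/2 * (r (V (Suc k)) (V (Suc k)) i + r (V (Suc k)) (V k) (Suc i))
        \<le> mu/2 * (r (V (Suc k)) (V k) i + r (V k) (V k) (Suc i))"
      using V_update[OF i, of k "V k i"] by (simp add: r_def layer_residual_def distrib_left)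
    then show ?thesis using mu by simp
  qed
  have first: "r (V (Suc k)) (V k) 1 \<le> r (V k) (V k) 1"
    by (simp add: r_def input_layer)
  have "N - 1 - 1 = N - 2" by simp
  then have last: "mu/2 * r (V (Suc k)) (V (Suc k)) (N-1) + pen (V (Suc k) (N-1))
      \<le> mu/2 * r (V (Suc k)) (V k) (N-1) + pen (V k (N-1))"
    using V_last_update[of k "V k (N-1)"] by (simp add: r_def pen_def layer_residual_def)
  have split_last: "(\<Sum>i\<in>{1..N-1}. r (V (Suc k)) (V (Suc k)) i)
      = (\<Sum>i\<in>{1..<N-1}. r (V (Suc k)) (V (Suc k)) i) + r (V (Suc k)) (V (Suc k)) (N-1)"
  proof -
    have "{1..N-1} = insert (N-1) {1..<N-1}" using N by auto
    then show ?thesis by simp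
  qed
  have "(\<Sum>i\<in>{1..<N-1}. r (V (Suc k)) (V (Suc k)) i) + r (V (Suc k)) (V k) (N-1)
      \<le> (\<Sum>i\<in>{1..N-1}. r (V k) (V k) i)"
    by (rule sweep_sum_le[OF _ first sweep]) (use N in simp_all)
  then have "mu/2 * ((\<Sum>i\<in>{1..<N-1}. r (V (Suc k)) (V (Suc k)) i) + r (V (Suc k)) (V k) (N-1))
      \<le> mu/2 * (\<Sum>i\<in>{1..N-1}. r (V k) (V k) i)"
    using mu by (intro mult_left_mono) simp_all
  then have "mu/2 * sum_sq_layer_residuals (W (Suc k)) (V (Suc k)) + pen (V (Suc k) (N-1))
      \<le> mu/2 * sum_sq_layer_residuals (W (Suc k)) (V k) + pen (V k (N-1))"
    using last unfolding sum_sq_layer_residuals_def r_def[symmetric] split_last distrib_left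
    by linarith
  then show ?thesis
    unfolding aug_lagrangian_shifted pen_def by simp
qed

lemma lagrangian_VN_step:
  "aug_lagrangian (W (Suc k)) (WN (Suc k)) (V (Suc k)) (VN (Suc k)) (Lam k)
      + (1 + beta)/2 * (norm (VN k - VN (Suc k)))\<^sup>2
    = aug_lagrangian (W (Suc k)) (WN (Suc k)) (V (Suc k)) (VN k) (Lam k)"
proof -
  have "(1 + beta) *\<^sub>R VN (Suc k) = Y + beta *\<^sub>R (WN (Suc k) ** V (Suc k) (N-1)) + Lam k"
    using VN_update[of k] beta by simp
  from quadratic_at_stationary_point[OF this, of "VN k"] show ?thesis
    unfolding aug_lagrangian_def by simp
qed

lemma multiplier_eq_output_residual: "Lam (Suc k) = VN (Suc k) - Y"
proof -
  have "(1 + beta) *\<^sub>R VN (Suc k) = Y + beta *\<^sub>R (WN (Suc k) ** V (Suc k) (N-1)) + Lam k"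
    using VN_update[of k] beta by simp
  moreover have "Lam (Suc k) = Lam k + beta *\<^sub>R (WN (Suc k) ** V (Suc k) (N-1)) - beta *\<^sub>R VN (Suc k)"
    using Lam_update[of k] by (simp add: scaleR_diff_right)
  ultimately have "Lam (Suc k) = (1 + beta) *\<^sub>R VN (Suc k) - Y - beta *\<^sub>R VN (Suc k)"
    by (simp add: algebra_simps)
  then show ?thesis by (simp add: algebra_simps)
qed

lemma lagrangian_Lam_step:
  assumes "1 \<le> k"
  shows "aug_lagrangian (W (Suc k)) (WN (Suc k)) (V (Suc k)) (VN (Suc k)) (Lam (Suc k))
    = aug_lagrangian (W (Suc k)) (WN (Suc k)) (V (Suc k)) (VN (Suc k)) (Lam k)
      + 1/beta * (norm (VN (Suc k) - VN k))\<^sup>2"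
proof -
  define r where "r = WN (Suc k) ** V (Suc k) (N-1) - VN (Suc k)"
  have dVN: "Lam (Suc k) - Lam k = VN (Suc k) - VN k"
    using multiplier_eq_output_residual[of k] multiplier_eq_output_residual[of "k - 1"] assms
    by simp
  have "r = (1/beta) *\<^sub>R (VN (Suc k) - VN k)"
    unfolding dVN[symmetric] using Lam_update[of k] beta by (simp add: r_def)
  moreover have "Lam (Suc k) = Lam k + (VN (Suc k) - VN k)"
    using dVN by (simp add: algebra_simps)
  ultimately have "inner (Lam (Suc k)) r = inner (Lam k) r + 1/beta * (norm (VN (Suc k) - VN k))\<^sup>2"
    by (simp add: power2_norm_eq_inner inner_add_left add_divide_distrib)
  then show ?thesis
    unfolding aug_lagrangian_def r_def by simp
qed

text \<open>The multiplier step raises the Lagrangian by \<open>\<parallel>\<Delta>VN\<parallel>\<^sup>2/beta\<close>, which the exact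
  \<open>VN\<close>-step pays for with its gain \<open>(1 + beta)/2 \<parallel>\<Delta>VN\<parallel>\<^sup>2\<close>, as \<open>beta > 1\<close>.\<close>
lemma lagrangian_decreasing:
  assumes "1 \<le> k"
  shows "lagrangian (Suc k) \<le> lagrangian k"
proof -
  have "2 \<le> beta * (1 + beta)"
    using beta mult_mono[of 1 beta 2 "1 + beta"] by simp
  then have gain: "1/beta \<le> (1 + beta)/2"
    using beta by (simp add: field_simps)
  have "1/beta * (norm (VN (Suc k) - VN k))\<^sup>2 \<le> (1 + beta)/2 * (norm (VN k - VN (Suc k)))\<^sup>2"
    using mult_right_mono[OF gain, of "(norm (VN k - VN (Suc k)))\<^sup>2"]
    by (simp add: norm_minus_commute)
  then show ?thesis
    using lagrangian_W_step[of k] lagrangian_V_step[of k] lagrangian_VN_step[of k]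
      lagrangian_Lam_step[OF assms]
    by linarith
qed

lemma lagrangian_le_first:
  assumes "1 \<le> k"
  shows "lagrangian k \<le> lagrangian 1"
  using assms
proof (induction k rule: dec_induct)
  case base
  then show ?case by simp
next
  case (step m)
  then show ?case using lagrangian_decreasing[of m] by simp
qed

lemma lagrangian_eq_sum_nonneg:
  assumes "1 \<le> k"
  shows "lagrangian k = lam/2 * sum_sq_weights (W k) + lam/2 * (norm (WN k))\<^sup>2
    + mu/2 * sum_sq_layer_residuals (W k) (V k)
    + 1/2 * (norm (Lam k + (WN k ** V k (N-1) - VN k)))\<^sup>2
    + (beta - 1)/2 * (norm (WN k ** V k (N-1) - VN k))\<^sup>2"
proof -
  have "VN k - Y = Lam k"
    using multiplier_eq_output_residual[of "k - 1"] assms by simp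
  then show ?thesis
    using half_square_inner_split[of "Lam k" "WN k ** V k (N-1) - VN k" beta]
    unfolding aug_lagrangian_def by simp
qed

lemma lagrangian_terms_le_first:
  assumes "1 \<le> k"
  shows "lam/2 * sum_sq_weights (W k) \<le> lagrangian 1"
    and "lam/2 * (norm (WN k))\<^sup>2 \<le> lagrangian 1"
    and "mu/2 * sum_sq_layer_residuals (W k) (V k) \<le> lagrangian 1"
    and "1/2 * (norm (Lam k + (WN k ** V k (N-1) - VN k)))\<^sup>2 \<le> lagrangian 1"
    and "(beta - 1)/2 * (norm (WN k ** V k (N-1) - VN k))\<^sup>2 \<le> lagrangian 1"
proof -
  have "0 \<le> sum_sq_weights (W k)" "0 \<le> sum_sq_layer_residuals (W k) (V k)"
    by (simp_all add: sum_sq_weights_def sum_sq_layer_residuals_def sum_nonneg)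
  then have "0 \<le> lam/2 * sum_sq_weights (W k)" "0 \<le> lam/2 * (norm (WN k))\<^sup>2"
    "0 \<le> mu/2 * sum_sq_layer_residuals (W k) (V k)"
    "0 \<le> (beta - 1)/2 * (norm (WN k ** V k (N-1) - VN k))\<^sup>2"
    using lam mu beta by simp_all
  moreover have "0 \<le> 1/2 * (norm (Lam k + (WN k ** V k (N-1) - VN k)))\<^sup>2"
    by simp
  ultimately show "lam/2 * sum_sq_weights (W k) \<le> lagrangian 1"
    and "lam/2 * (norm (WN k))\<^sup>2 \<le> lagrangian 1"
    and "mu/2 * sum_sq_layer_residuals (W k) (V k) \<le> lagrangian 1"
    and "1/2 * (norm (Lam k + (WN k ** V k (N-1) - VN k)))\<^sup>2 \<le> lagrangian 1"
    and "(beta - 1)/2 * (norm (WN k ** V k (N-1) - VN k))\<^sup>2 \<le> lagrangian 1"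
    using lagrangian_le_first[OF assms] lagrangian_eq_sum_nonneg[OF assms] by linarith+
qed

lemma weight_bounded:
  assumes "1 \<le> k" and i: "i \<in> {1..N-1}"
  shows "norm (W k i) \<le> sqrt (2 * lagrangian 1 / lam)"
proof -
  have "(norm (W k i))\<^sup>2 \<le> sum_sq_weights (W k)"
    unfolding sum_sq_weights_def by (rule member_le_sum[OF i]) simp_all
  then have "lam/2 * (norm (W k i))\<^sup>2 \<le> lam/2 * sum_sq_weights (W k)"
    using lam by simp
  then have "lam/2 * (norm (W k i))\<^sup>2 \<le> lagrangian 1"
    using lagrangian_terms_le_first(1)[OF assms(1)] by linarith
  then show ?thesis by (rule le_sqrt_of_half_scaled_square_le[OF lam])
qed

lemma output_weight_bounded:
  assumes "1 \<le> k"
  shows "norm (WN k) \<le> sqrt (2 * lagrangian 1 / lam)"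
  using lagrangian_terms_le_first(2)[OF assms] lam le_sqrt_of_half_scaled_square_le by blast

lemma layer_residual_bounded:
  assumes "1 \<le> k" and i: "i \<in> {1..N-1}"
  shows "norm (layer_residual i (W k i) (V k (i-1)) (V k i)) \<le> sqrt (2 * lagrangian 1 / mu)"
proof -
  have "(norm (layer_residual i (W k i) (V k (i-1)) (V k i)))\<^sup>2 \<le> sum_sq_layer_residuals (W k) (V k)"
    unfolding sum_sq_layer_residuals_def by (rule member_le_sum[OF i]) simp_all
  then have "mu/2 * (norm (layer_residual i (W k i) (V k (i-1)) (V k i)))\<^sup>2
      \<le> mu/2 * sum_sq_layer_residuals (W k) (V k)"
    using mu by simp
  then have "mu/2 * (norm (layer_residual i (W k i) (V k (i-1)) (V k i)))\<^sup>2 \<le> lagrangian 1"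
    using lagrangian_terms_le_first(3)[OF assms(1)] by linarith
  then show ?thesis by (rule le_sqrt_of_half_scaled_square_le[OF mu])
qed

lemma hidden_layer_bounded:
  assumes "1 \<le> k" and "i \<le> N - 1"
  shows "norm (V k i) \<le> norm X + real i *
    (real CARD('d) * real CARD('n) * psi0 + sqrt (2 * lagrangian 1 / mu))"
  using assms(2)
proof (induction i)
  case 0
  then show ?case by (simp add: input_layer)
next
  case (Suc j)
  then have j: "Suc j \<in> {1..N-1}" by simp
  define E where "E = entrywise (sigma (Suc j)) (W k (Suc j) ** V k j)"
  define R where "R = layer_residual (Suc j) (W k (Suc j)) (V k j) (V k (Suc j))"
  have "V k (Suc j) = (V k j + E) - R"
    by (simp add: E_def R_def layer_residual_def)
  then have "norm (V k (Suc j)) \<le> norm (V k j + E) + norm R"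
    using norm_triangle_ineq4[of "V k j + E" R] by simp
  also have "\<dots> \<le> norm (V k j) + norm E + norm R"
    using norm_triangle_ineq[of "V k j" E] by simp
  also have "\<dots> \<le> norm X + real j * (real CARD('d) * real CARD('n) * psi0 + sqrt (2 * lagrangian 1 / mu))
      + real CARD('d) * real CARD('n) * psi0 + sqrt (2 * lagrangian 1 / mu)"
  proof -
    have "norm E \<le> real CARD('d) * real CARD('n) * psi0"
      unfolding E_def by (rule norm_entrywise_le) (rule sigma_bounded[OF j])
    moreover have "norm R \<le> sqrt (2 * lagrangian 1 / mu)"
      using layer_residual_bounded[OF assms(1) j] by (simp add: R_def)
    ultimately show ?thesis
      using Suc.IH Suc.prems by simp
  qed
  finally show ?case by (simp add: algebra_simps)
qed

lemma multiplier_bounded: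
  assumes "1 \<le> k"
  shows "norm (Lam k) \<le> sqrt (2 * lagrangian 1) + sqrt (2 * lagrangian 1 / (beta - 1))"
proof -
  define D where "D = WN k ** V k (N-1) - VN k"
  have "norm (Lam k + D) \<le> sqrt (2 * lagrangian 1 / 1)"
    using lagrangian_terms_le_first(4)[OF assms] le_sqrt_of_half_scaled_square_le[of 1]
    unfolding D_def by simp
  moreover have "norm D \<le> sqrt (2 * lagrangian 1 / (beta - 1))"
    using lagrangian_terms_le_first(5)[OF assms] beta le_sqrt_of_half_scaled_square_le[of "beta - 1"]
    unfolding D_def by simp
  moreover have "norm (Lam k) \<le> norm (Lam k + D) + norm D"
    using norm_triangle_ineq4[of "Lam k + D" D] by simp
  ultimately show ?thesis by simp
qed

lemma output_bounded:
  assumes "1 \<le> k"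
  shows "norm (VN k) \<le> sqrt (2 * lagrangian 1) + sqrt (2 * lagrangian 1 / (beta - 1)) + norm Y"
proof -
  have "VN k = Lam k + Y"
    using multiplier_eq_output_residual[of "k - 1"] assms by simp
  then show ?thesis
    using multiplier_bounded[OF assms] norm_triangle_ineq[of "Lam k" Y] by simp
qed

lemma iterates_bounded:
  "\<exists>Wmax Vmax :: nat \<Rightarrow> real. \<exists>lmax :: real.
     (\<forall>i\<in>{1..N}. Wmax i > 0 \<and> Vmax i > 0) \<and> lmax > 0 \<and>
     (\<forall>k. (\<forall>i\<in>{1..N-1}. norm (W k i) \<le> Wmax i \<and> norm (V k i) \<le> Vmax i)
          \<and> norm (WN k) \<le> Wmax N \<and> norm (VN k) \<le> Vmax N \<and> norm (Lam k) \<le> lmax)"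
proof -
  define wb where "wb = sqrt (2 * lagrangian 1 / lam)"
  define vb where "vb i = norm X + real i *
    (real CARD('d) * real CARD('n) * psi0 + sqrt (2 * lagrangian 1 / mu))" for i
  define lb where "lb = sqrt (2 * lagrangian 1) + sqrt (2 * lagrangian 1 / (beta - 1))"
  define Wmax where "Wmax = (\<lambda>i. max wb (norm (W 0 i)) + 1)(N := max wb (norm (WN 0)) + 1)"
  define Vmax where "Vmax = (\<lambda>i. max (vb i) (norm (V 0 i)) + 1)(N := max (lb + norm Y) (norm (VN 0)) + 1)"
  define lmax where "lmax = max lb (norm (Lam 0)) + 1"
  have "norm (W k i) \<le> Wmax i \<and> norm (V k i) \<le> Vmax i" if i: "i \<in> {1..N-1}" for k i
  proof -
    have "Wmax i = max wb (norm (W 0 i)) + 1" "Vmax i = max (vb i) (norm (V 0 i)) + 1"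
      using i by (auto simp: Wmax_def Vmax_def)
    moreover have "norm (W k i) \<le> max wb (norm (W 0 i)) + 1"
      by (rule norm_le_max_initial) (use weight_bounded i in \<open>simp add: wb_def\<close>)
    moreover have "norm (V k i) \<le> max (vb i) (norm (V 0 i)) + 1"
      by (rule norm_le_max_initial) (use hidden_layer_bounded i in \<open>simp add: vb_def\<close>)
    ultimately show ?thesis by simp
  qed
  moreover have "norm (WN k) \<le> Wmax N" for k
    using norm_le_max_initial[of WN wb k] output_weight_bounded
    unfolding Wmax_def wb_def by simp
  moreover have "norm (VN k) \<le> Vmax N" for k
    using norm_le_max_initial[of VN "lb + norm Y" k] output_bounded
    unfolding Vmax_def lb_def by simp
  moreover have "norm (Lam k) \<le> lmax" for k
    using norm_le_max_initial[of Lam lb k] multiplier_bounded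
    unfolding lmax_def lb_def by simp
  moreover have "Wmax i > 0" "Vmax i > 0" "lmax > 0" for i
    unfolding Wmax_def Vmax_def lmax_def by (simp_all add: max_norm_plus_one_pos)
  ultimately show ?thesis by blast
qed

end

theorem mainTheorem5:
  fixes X :: "real^'n^'d" and Y :: "real^'n^'q"
    and N :: nat and lam mu beta psi0 psi1 psi2 :: real
    and sigma :: "nat \<Rightarrow> real \<Rightarrow> real"
    and W :: "nat \<Rightarrow> nat \<Rightarrow> real^'d^'d"
    and WN :: "nat \<Rightarrow> real^'d^'q"
    and V :: "nat \<Rightarrow> nat \<Rightarrow> real^'n^'d"
    and VN Lam :: "nat \<Rightarrow> real^'n^'q"
    and omega nu :: "nat \<Rightarrow> nat \<Rightarrow> real"
    and omin omax numin numax :: "nat \<Rightarrow> real"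
  assumes N: "N \<ge> 3" and lam: "lam > 0" and mu: "mu > 0" and beta: "beta > 1"
    and act: "\<forall>i\<in>{1..N-1}. real_analytic (sigma i) \<and>
               (\<forall>x. \<bar>sigma i x\<bar> \<le> psi0 \<and> \<bar>deriv (sigma i) x\<bar> \<le> psi1
                    \<and> \<bar>deriv (deriv (sigma i)) x\<bar> \<le> psi2)"
    and om: "\<forall>i\<in>{1..N-1}. 0 < omin i \<and> omin i \<le> omax i \<and>
               (\<forall>k. omin i \<le> omega k i \<and> omega k i \<le> omax i)"
    and nu: "\<forall>i\<in>{1..N-2}. 0 < numin i \<and> numin i \<le> numax i \<and>
               (\<forall>k. numin i \<le> nu k i \<and> nu k i \<le> numax i)"
    and V0: "\<forall>k. V k 0 = X"
    and init_V: "\<forall>i\<in>{1..N-1}. V 0 i = V 0 (i-1) + entrywise (sigma i) (W 0 i ** V 0 (i-1))"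
    and init_VN: "VN 0 = WN 0 ** V 0 (N-1)"
    and init_Lam: "Lam 0 = 0"
    and step_a: "\<forall>k\<ge>1. \<forall>Wn.
        lam/2 * (norm (WN k))^2
          + beta/2 * (norm (WN k ** V (k-1) (N-1) - VN (k-1) + (1/beta) *\<^sub>R Lam (k-1)))^2
        \<le> lam/2 * (norm Wn)^2
          + beta/2 * (norm (Wn ** V (k-1) (N-1) - VN (k-1) + (1/beta) *\<^sub>R Lam (k-1)))^2"
    and step_b: "\<forall>k\<ge>1. \<forall>i\<in>{1..N-1}. \<forall>Wi.
        lam/2 * (norm (W k i))^2
          + mu/2 * (norm (V (k-1) (i-1) + entrywise (sigma i) (W k i ** V (k-1) (i-1)) - V (k-1) i))^2
          + omega (k-1) i / 2 * (norm (W k i - W (k-1) i))^2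
        \<le> lam/2 * (norm Wi)^2
          + mu/2 * (norm (V (k-1) (i-1) + entrywise (sigma i) (Wi ** V (k-1) (i-1)) - V (k-1) i))^2
          + omega (k-1) i / 2 * (norm (Wi - W (k-1) i))^2"
    and step_c: "\<forall>k\<ge>1. \<forall>i\<in>{1..N-2}. \<forall>Vi.
        mu/2 * (norm (V k (i-1) + entrywise (sigma i) (W k i ** V k (i-1)) - V k i))^2
          + mu/2 * (norm (V k i + entrywise (sigma (i+1)) (W k (i+1) ** V k i) - V (k-1) (i+1)))^2
          + nu (k-1) i / 2 * (norm (V k i - V (k-1) i))^2
        \<le> mu/2 * (norm (V k (i-1) + entrywise (sigma i) (W k i ** V k (i-1)) - Vi))^2
          + mu/2 * (norm (Vi + entrywise (sigma (i+1)) (W k (i+1) ** Vi) - V (k-1) (i+1)))^2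
          + nu (k-1) i / 2 * (norm (Vi - V (k-1) i))^2"
    and step_d: "\<forall>k\<ge>1. \<forall>Vv.
        mu/2 * (norm (V k (N-2) + entrywise (sigma (N-1)) (W k (N-1) ** V k (N-2)) - V k (N-1)))^2
          + beta/2 * (norm (WN k ** V k (N-1) - VN (k-1) + (1/beta) *\<^sub>R Lam (k-1)))^2
        \<le> mu/2 * (norm (V k (N-2) + entrywise (sigma (N-1)) (W k (N-1) ** V k (N-2)) - Vv))^2
          + beta/2 * (norm (WN k ** Vv - VN (k-1) + (1/beta) *\<^sub>R Lam (k-1)))^2"
    and step_e: "\<forall>k\<ge>1. VN k = (1/(1+beta)) *\<^sub>R (Y + beta *\<^sub>R (WN k ** V k (N-1)) + Lam (k-1))"
    and step_f: "\<forall>k\<ge>1. Lam k = Lam (k-1) + beta *\<^sub>R (WN k ** V k (N-1) - VN k)"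
  shows "\<exists>Wmax Vmax :: nat \<Rightarrow> real. \<exists>lmax :: real.
           (\<forall>i\<in>{1..N}. Wmax i > 0 \<and> Vmax i > 0) \<and> lmax > 0 \<and>
           (\<forall>k. (\<forall>i\<in>{1..N-1}. norm (W k i) \<le> Wmax i \<and> norm (V k i) \<le> Vmax i)
                \<and> norm (WN k) \<le> Wmax N \<and> norm (VN k) \<le> Vmax N
                \<and> norm (Lam k) \<le> lmax)"
proof -
  interpret two_splitting_admm X Y N lam mu beta psi0 sigma W WN V VN Lam omega nu
  proof
    show "2 \<le> N" using N by simp
    show "lam > 0" "mu > 0" "beta > 1" by (fact lam mu beta)+
    show "\<bar>sigma i x\<bar> \<le> psi0" if "i \<in> {1..N-1}" for i x
      using act that by blast
    show "0 \<le> omega k i" if "i \<in> {1..N-1}" for k i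
    proof -
      have "0 < omin i" "omin i \<le> omega k i" using om that by auto
      then show ?thesis by linarith
    qed
    show "0 \<le> nu k i" if "i \<in> {1..N-2}" for k i
    proof -
      have "0 < numin i" "numin i \<le> nu k i" using nu that by auto
      then show ?thesis by linarith
    qed
    show "V k 0 = X" for k
      using V0 by blast
  qed (use step_a[rule_format, of "Suc k" for k] step_b[rule_format, of "Suc k" for k]
      step_c[rule_format, of "Suc k" for k] step_d[rule_format, of "Suc k" for k]
      step_e[rule_format, of "Suc k" for k] step_f[rule_format, of "Suc k" for k] in simp_all)
  show ?thesis by (rule iterates_bounded)
qed

end
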